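(* Let $k\ge3$ and let $\{S_n\}$ be a perturbed sequence of weak shifts of degree $d$ corresponding to a uniformly bounded sequence of weak shift-like maps of degree $\tilde d\le d-2$. Let $G_n(z)=d^{-n}\log^+\|S(n)(z)\|_{\sup}$ and let $G$ be the function equal to $\lim_n G_n$ on $U^+$ and to $0$ on $\mathbb{C}^k\setminus U^+$. Then $\{G_n\}$ converges to $G$ uniformly on compact subsets of $\mathbb{C}^k$.
   Context: Let $Q_m(z)=z^m$ and $\mathbf H_d(w_1,\dots,w_{k-1})=\sum_{i=1}^{k-1}w_i^d$. A uniformly bounded sequence of weak shift-like maps of degree $\tilde d\ge1$ is a sequence $\mathsf S_n(z)=(z_2,\dots,z_k,a_nz_1+p_n(z_2,\dots,z_k))$ with $\deg(a_nz_1+p_n)=\tilde d$, $p_n=\sum_i\alpha_{i,n}\mathbf z^i$, and constants $\tilde m,\tilde M>0$ with $\tilde m<|a_n|<\tilde M$, $|\alpha_{i,n}|<\tilde M$. The associated perturbed sequence of weak shifts of degree $d\ge\tilde d+2$ is $S_n(z)=\mathsf S_n(z)+(0,\dots,0,Q_{d-1}(z_2),\mathbf H_d(z_2,\dots,z_k))$. $S(n)=S_n\circ\cdots\circ S_1$; $\|\cdot\|_{\sup}$ is the sup-norm; $\log^+=\max\{\log,0\}$. $U^+=\{z\in\mathbb{C}^k:\overline{S(n)}([z:1])\to[0:\cdots:0:1:0]\}$ (extension to $\mathbb{P}^k$; limit point has only the $k$-th homogeneous coordinate nonzero); the limit $\lim_nG_n$ exists on $U^+$. *)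

theory Defs
  imports "HOL-Analysis.Analysis"
begin

text \<open>Points of C^k are represented as functions nat => complex, with the paper's
coordinate z_(j+1) stored at index j (j < k) and all indices >= k equal to 0.\<close>

definition Ck :: "nat \<Rightarrow> (nat \<Rightarrow> complex) set" where
  "Ck k = {z. \<forall>j\<ge>k. z j = 0}"

text \<open>Multi-indices: exponent functions nat => nat; the monomial z^i in the
variables z_2,...,z_k (indices 1..k-1).\<close>

definition multi_deg :: "(nat \<Rightarrow> nat) \<Rightarrow> nat \<Rightarrow> nat" where
  "multi_deg i k = (\<Sum>j\<in>{1..<k}. i j)"

definition monom :: "nat \<Rightarrow> (nat \<Rightarrow> nat) \<Rightarrow> (nat \<Rightarrow> complex) \<Rightarrow> complex" where
  "monom k i z = (\<Prod>j\<in>{1..<k}. z j ^ i j)"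

definition poly_p :: "nat \<Rightarrow> ((nat \<Rightarrow> nat) \<Rightarrow> complex) \<Rightarrow> (nat \<Rightarrow> complex) \<Rightarrow> complex" where
  "poly_p k \<alpha> z = (\<Sum>i\<in>{i. \<alpha> i \<noteq> 0}. \<alpha> i * monom k i z)"

text \<open>Perturbed weak shift:
  S(z) = (z_2,...,z_k, a z_1 + p(z_2..z_k)) + (0,...,0, z_2^(d-1), sum_(i=2..k) z_i^d).\<close>

definition weak_shift ::
  "nat \<Rightarrow> nat \<Rightarrow> complex \<Rightarrow> ((nat \<Rightarrow> nat) \<Rightarrow> complex) \<Rightarrow> (nat \<Rightarrow> complex) \<Rightarrow> (nat \<Rightarrow> complex)" where
  "weak_shift k d a \<alpha> z = (\<lambda>j.
     if j < k - 2 then z (j + 1)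
     else if j = k - 2 then z (k - 1) + z 1 ^ (d - 1)
     else if j = k - 1 then a * z 0 + poly_p k \<alpha> z + (\<Sum>l\<in>{1..<k}. z l ^ d)
     else 0)"

text \<open>S(n) = S_n o ... o S_1, where the n-th map S_n uses the data a (n-1), alpha (n-1).\<close>

fun Scomp :: "nat \<Rightarrow> nat \<Rightarrow> (nat \<Rightarrow> complex) \<Rightarrow> (nat \<Rightarrow> (nat \<Rightarrow> nat) \<Rightarrow> complex)
               \<Rightarrow> nat \<Rightarrow> (nat \<Rightarrow> complex) \<Rightarrow> (nat \<Rightarrow> complex)" where
  "Scomp k d a \<alpha> 0 = id"
| "Scomp k d a \<alpha> (Suc n) = weak_shift k d (a n) (\<alpha> n) \<circ> Scomp k d a \<alpha> n"

definition supnorm :: "nat \<Rightarrow> (nat \<Rightarrow> complex) \<Rightarrow> real" where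
  "supnorm k z = Max ((\<lambda>j. cmod (z j)) ` {..<k})"

definition logplus :: "real \<Rightarrow> real" where
  "logplus x = (if x \<le> 1 then 0 else ln x)"

definition Gn :: "nat \<Rightarrow> nat \<Rightarrow> (nat \<Rightarrow> complex) \<Rightarrow> (nat \<Rightarrow> (nat \<Rightarrow> nat) \<Rightarrow> complex)
               \<Rightarrow> nat \<Rightarrow> (nat \<Rightarrow> complex) \<Rightarrow> real" where
  "Gn k d a \<alpha> n z = logplus (supnorm k (Scomp k d a \<alpha> n z)) / real d ^ n"

text \<open>Convergence of [w_n : 1] in P^k to [0:...:0:1:0] (only the k-th homogeneous
coordinate nonzero), expressed in the standard affine chart {w_k \<noteq> 0} of P^k
around that point, whose coordinates are w_j / w_k (j \<noteq> k) and 1 / w_k.\<close>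

definition proj_tendsto_ek :: "nat \<Rightarrow> (nat \<Rightarrow> nat \<Rightarrow> complex) \<Rightarrow> bool" where
  "proj_tendsto_ek k w \<longleftrightarrow>
     (\<forall>\<^sub>F n in sequentially. w n (k - 1) \<noteq> 0) \<and>
     (\<forall>j<k. j \<noteq> k - 1 \<longrightarrow> ((\<lambda>n. w n j / w n (k - 1)) \<longlongrightarrow> 0) sequentially) \<and>
     ((\<lambda>n. 1 / w n (k - 1)) \<longlongrightarrow> 0) sequentially"

definition Uplus :: "nat \<Rightarrow> nat \<Rightarrow> (nat \<Rightarrow> complex) \<Rightarrow> (nat \<Rightarrow> (nat \<Rightarrow> nat) \<Rightarrow> complex)
                    \<Rightarrow> (nat \<Rightarrow> complex) set" where
  "Uplus k d a \<alpha> = {z \<in> Ck k. proj_tendsto_ek k (\<lambda>n. Scomp k d a \<alpha> n z)}"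

definition Gfun :: "nat \<Rightarrow> nat \<Rightarrow> (nat \<Rightarrow> complex) \<Rightarrow> (nat \<Rightarrow> (nat \<Rightarrow> nat) \<Rightarrow> complex)
                    \<Rightarrow> (nat \<Rightarrow> complex) \<Rightarrow> real" where
  "Gfun k d a \<alpha> z = (if z \<in> Uplus k d a \<alpha> then lim (\<lambda>n. Gn k d a \<alpha> n z) else 0)"

end

theory Submission
  imports Defs
begin

text \<open>
Write L_n = log max(1, |S(n) z|) for the sup-norm, so that G_n = L_n / d^n. Every S_n satisfies
max(1, |S_n w|) <= C max(1, |w|)^d, hence L_(n+1) <= d L_n + log C. On the region V where the
last coordinate is large and dominates k times every other coordinate, the term w_k^d dominates
the last coordinate of S_n w; therefore S_n maps V into itself, L_(n+1) >= d L_n - log C along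
orbits in V, and such orbits converge to [0:...:0:1:0]. If S_n w lies outside V, its last
coordinate is bounded by a constant or by k times another coordinate, which has degree at most
d - 1, so L_(n+1) <= (d - 1) L_n + log C. Consequently an orbit either never enters V, and then
G_n <= ((d - 1)/d)^n (L_0 + log C) tends to 0, or it enters V at some time, after which G_n moves
by at most log C / d^n per step. Both cases give
|G_m - G_n| <= ((d - 1)/d)^n (L_0 + log C) + 2 log C / d^n for m >= n, uniformly as long as L_0
is bounded, in particular on compact sets. Points outside U^+ never enter V, so there the limit
is 0.
\<close>

definition supnorm1 :: "nat \<Rightarrow> (nat \<Rightarrow> complex) \<Rightarrow> real" where
  "supnorm1 k w = max 1 (supnorm k w)"

lemma norm_le_supnorm: "j < k \<Longrightarrow> cmod (w j) \<le> supnorm k w"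
  unfolding supnorm_def by (rule Max_ge) auto

lemma supnorm_le: "0 < k \<Longrightarrow> (\<And>j. j < k \<Longrightarrow> cmod (w j) \<le> b) \<Longrightarrow> supnorm k w \<le> b"
  unfolding supnorm_def by (subst Max_le_iff) auto

lemma supnorm1_ge_1: "1 \<le> supnorm1 k w"
  unfolding supnorm1_def by simp

lemma supnorm1_pos: "0 < supnorm1 k w"
  using supnorm1_ge_1[of k w] by linarith

lemma supnorm1_nonneg [simp]: "0 \<le> supnorm1 k w"
  using supnorm1_pos[of k w] by linarith

lemma norm_le_supnorm1: "j < k \<Longrightarrow> cmod (w j) \<le> supnorm1 k w"
  unfolding supnorm1_def using norm_le_supnorm by (meson max.coboundedI2)

lemma supnorm1_le:
  "0 < k \<Longrightarrow> 1 \<le> b \<Longrightarrow> (\<And>j. j < k \<Longrightarrow> cmod (w j) \<le> b) \<Longrightarrow> supnorm1 k w \<le> b"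
  unfolding supnorm1_def using supnorm_le by simp

lemma logplus_supnorm: "logplus (supnorm k w) = ln (supnorm1 k w)"
  unfolding logplus_def supnorm1_def by auto

lemma compact_supnorm1_bounded:
  assumes "compact K" "0 < k"
  obtains B where "\<And>z. z \<in> K \<Longrightarrow> supnorm1 k z \<le> B"
proof -
  have "bounded (\<Union>j<k. (\<lambda>z. z j) ` K)"
    using assms(1) by (intro bounded_UN ballI compact_imp_bounded compact_continuous_image)
      (auto intro: continuous_on_subset[OF continuous_on_product_coordinates])
  then obtain b where b: "\<And>z j. z \<in> K \<Longrightarrow> j < k \<Longrightarrow> cmod (z j) \<le> b"
    unfolding bounded_iff by blast
  show ?thesis
    by (rule that[of "max 1 b"])
      (auto intro!: supnorm1_le assms(2) intro: order_trans[OF b] simp: le_max_iff_disj)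
qed

definition exponents :: "nat \<Rightarrow> nat \<Rightarrow> (nat \<Rightarrow> nat) set" where
  "exponents k m = {i. (\<forall>j. j \<notin> {1..<k} \<longrightarrow> i j = 0) \<and> multi_deg i k \<le> m}"

lemma finite_exponents: "finite (exponents k m)"
proof (rule finite_subset)
  show "exponents k m \<subseteq> {i. \<forall>j. (j \<in> {1..<k} \<longrightarrow> i j \<in> {0..m}) \<and> (j \<notin> {1..<k} \<longrightarrow> i j = 0)}"
  proof safe
    fix i j assume "i \<in> exponents k m" "j \<in> {1..<k}"
    then have "i j \<le> multi_deg i k" "multi_deg i k \<le> m"
      unfolding exponents_def multi_deg_def by (auto intro: member_le_sum)
    then show "i j \<in> {0..m}" by simp
  qed (auto simp: exponents_def)
qed (rule finite_set_of_finite_funs; simp)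

lemma norm_monom_le:
  assumes "\<And>j. j \<in> {1..<k} \<Longrightarrow> cmod (w j) \<le> r"
  shows "cmod (monom k i w) \<le> r ^ multi_deg i k"
proof -
  have "cmod (monom k i w) = (\<Prod>j\<in>{1..<k}. cmod (w j) ^ i j)"
    unfolding monom_def by (simp add: prod_norm[symmetric] norm_power)
  also have "\<dots> \<le> (\<Prod>j\<in>{1..<k}. r ^ i j)"
    by (intro prod_mono conjI power_mono assms) auto
  finally show ?thesis
    unfolding multi_deg_def by (simp add: power_sum)
qed

lemma norm_poly_p_le:
  assumes r: "1 \<le> r" "\<And>j. j \<in> {1..<k} \<Longrightarrow> cmod (w j) \<le> r"
    and coeff: "\<And>i. cmod (\<alpha> i) \<le> M" "{i. \<alpha> i \<noteq> 0} \<subseteq> exponents k m"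
  shows "cmod (poly_p k \<alpha> w) \<le> M * card (exponents k m) * r ^ m"
proof -
  have M: "0 \<le> M" using order_trans[OF norm_ge_zero coeff(1)] .
  have "cmod (poly_p k \<alpha> w) \<le> (\<Sum>i\<in>{i. \<alpha> i \<noteq> 0}. cmod (\<alpha> i) * cmod (monom k i w))"
    unfolding poly_p_def norm_mult[symmetric] by (rule norm_sum)
  also have "\<dots> \<le> (\<Sum>i\<in>{i. \<alpha> i \<noteq> 0}. M * r ^ m)"
  proof (rule sum_mono)
    fix i assume "i \<in> {i. \<alpha> i \<noteq> 0}"
    then have deg: "multi_deg i k \<le> m" using coeff(2) unfolding exponents_def by blast
    have "cmod (monom k i w) \<le> r ^ multi_deg i k" by (rule norm_monom_le[OF r(2)])
    also have "\<dots> \<le> r ^ m" using deg r(1) by (rule power_increasing)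
    finally have "cmod (monom k i w) \<le> r ^ m" .
    then show "cmod (\<alpha> i) * cmod (monom k i w) \<le> M * r ^ m"
      using coeff(1) M by (intro mult_mono) auto
  qed
  also have "\<dots> = card {i. \<alpha> i \<noteq> 0} * (M * r ^ m)" by simp
  also have "\<dots> \<le> card (exponents k m) * (M * r ^ m)"
    using card_mono[OF finite_exponents coeff(2)] M r(1) by (intro mult_right_mono) auto
  finally show ?thesis by (simp add: mult_ac)
qed

lemma uniformly_Cauchy_onI_bound:
  fixes f :: "nat \<Rightarrow> 'a \<Rightarrow> 'b::metric_space"
  assumes bound: "\<And>x n m. x \<in> X \<Longrightarrow> n \<le> m \<Longrightarrow> dist (f m x) (f n x) \<le> \<epsilon> n"
    and \<epsilon>: "\<epsilon> \<longlonglongrightarrow> 0"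
  shows "uniformly_Cauchy_on X f"
proof (rule uniformly_Cauchy_onI)
  fix e :: real assume "0 < e"
  then obtain M where M: "\<And>n. M \<le> n \<Longrightarrow> \<epsilon> n < e / 2"
    using order_tendstoD(2)[OF \<epsilon>, of "e / 2"] unfolding eventually_sequentially by auto
  have "dist (f m x) (f n x) < e" if "x \<in> X" "M \<le> m" "M \<le> n" for x m n
    using bound[OF that(1,2)] bound[OF that(1,3)] M[of M] dist_triangle_half_l[of "f m x" "f M x" e "f n x"]
    by (simp add: dist_commute)
  then show "\<exists>M. \<forall>x\<in>X. \<forall>m\<ge>M. \<forall>n\<ge>M. dist (f m x) (f n x) < e" by blast
qed

lemma uniformly_Cauchy_on_uniform_limit:
  fixes f :: "nat \<Rightarrow> 'a \<Rightarrow> 'b::complete_space"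
  assumes "uniformly_Cauchy_on X f" and lim: "\<And>x. x \<in> X \<Longrightarrow> (\<lambda>n. f n x) \<longlonglongrightarrow> g x"
  shows "uniform_limit X f g sequentially"
proof -
  obtain l where l: "uniform_limit X f l sequentially"
    using Cauchy_uniformly_convergent[OF assms(1)] unfolding uniformly_convergent_on_def by blast
  have "l x = g x" if "x \<in> X" for x
    using tendsto_unique[OF _ tendsto_uniform_limitI[OF l that] lim[OF that]] by simp
  then have "uniform_limit X f l sequentially \<longleftrightarrow> uniform_limit X f g sequentially"
    by (intro uniform_limit_cong') auto
  with l show ?thesis by blast
qed

lemma proj_tendsto_ekI:
  assumes grow: "filterlim (\<lambda>n. cmod (w n (k - 1))) at_top sequentially"
    and ratio: "\<forall>\<^sub>F n in sequentially. \<forall>j<k - 1.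
                  cmod (w (Suc n) j) \<le> c / cmod (w n (k - 1)) * cmod (w (Suc n) (k - 1))"
  shows "proj_tendsto_ek k w"
proof -
  have pos: "\<forall>\<^sub>F n in sequentially. 0 < cmod (w n (k - 1))"
    using grow by (rule filterlim_at_top_dense[THEN iffD1, rule_format])
  have inv: "(\<lambda>n. 1 / cmod (w n (k - 1))) \<longlonglongrightarrow> 0"
    using tendsto_inverse_0_at_top[OF grow] by (simp add: divide_inverse)
  have "(\<lambda>n. 1 / w n (k - 1)) \<longlonglongrightarrow> 0"
    by (rule tendsto_norm_zero_cancel) (unfold norm_divide norm_one, rule inv)
  moreover have "(\<lambda>n. w n j / w n (k - 1)) \<longlonglongrightarrow> 0" if "j < k" "j \<noteq> k - 1" for j
  proof (rule LIMSEQ_imp_Suc, rule Lim_null_comparison)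
    have "(\<lambda>n. c * (1 / cmod (w n (k - 1)))) \<longlonglongrightarrow> c * 0"
      by (intro tendsto_mult tendsto_const inv)
    then show "(\<lambda>n. c / cmod (w n (k - 1))) \<longlonglongrightarrow> 0" by simp
    have j: "j < k - 1" using that by simp
    show "\<forall>\<^sub>F n in sequentially. norm (w (Suc n) j / w (Suc n) (k - 1)) \<le> c / cmod (w n (k - 1))"
      using ratio eventually_sequentially_Suc[THEN iffD2, OF pos]
    proof eventually_elim
      case (elim n)
      then show ?case using j by (simp add: norm_divide pos_divide_le_eq)
    qed
  qed
  moreover have "\<forall>\<^sub>F n in sequentially. w n (k - 1) \<noteq> 0"
    using pos by (rule eventually_mono) auto
  ultimately show ?thesis
    unfolding proj_tendsto_ek_def by blast
qed

text \<open>Along one orbit, L n stands for log max(1, |S(n) z|) and V n for S(n) z lying in the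
invariant region.\<close>

locale escape_rate =
  fixes d c :: real and L :: "nat \<Rightarrow> real" and V :: "nat \<Rightarrow> bool"
  assumes d_ge_3: "3 \<le> d"
    and c_nonneg: "0 \<le> c"
    and L_nonneg: "0 \<le> L n"
    and L_Suc_le: "L (Suc n) \<le> d * L n + c"
    and L_Suc_ge: "V n \<Longrightarrow> d * L n - c \<le> L (Suc n)"
    and V_Suc: "V n \<Longrightarrow> V (Suc n)"
    and L_Suc_le_outside: "\<not> V (Suc n) \<Longrightarrow> L (Suc n) \<le> (d - 1) * L n + c"
begin

lemma V_mono:
  assumes "V n" "n \<le> m"
  shows "V m"
  using assms(2) by (induction m rule: dec_induct) (auto intro: V_Suc assms(1))

lemma normalized_Suc_diff: "L (Suc n) / d ^ Suc n - L n / d ^ n = (L (Suc n) - d * L n) / d ^ Suc n"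
  using d_ge_3 by (simp add: field_simps)

lemma normalized_Suc_le: "L (Suc n) / d ^ Suc n \<le> L n / d ^ n + c / d ^ Suc n"
proof -
  have "(L (Suc n) - d * L n) / d ^ Suc n \<le> c / d ^ Suc n"
    using L_Suc_le[of n] d_ge_3 by (intro divide_right_mono) auto
  then show ?thesis unfolding normalized_Suc_diff[symmetric] by simp
qed

lemma normalized_diff_inside:
  assumes "V n" "n \<le> m"
  shows "\<bar>L m / d ^ m - L n / d ^ n\<bar> \<le> c / d ^ n"
proof -
  have "\<bar>L m / d ^ m - L n / d ^ n\<bar> \<le> c / d ^ n - c / d ^ m"
    using assms(2)
  proof (induction m rule: dec_induct)
    case (step m)
    have "\<bar>L (Suc m) - d * L m\<bar> \<le> c"
      unfolding abs_le_iff using L_Suc_le[of m] L_Suc_ge[OF V_mono[OF assms(1) step.hyps(1)]]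
      by linarith
    moreover have "\<bar>L (Suc m) / d ^ Suc m - L m / d ^ m\<bar> = \<bar>L (Suc m) - d * L m\<bar> / d ^ Suc m"
      unfolding normalized_Suc_diff abs_divide using d_ge_3 by simp
    ultimately have "\<bar>L (Suc m) / d ^ Suc m - L m / d ^ m\<bar> \<le> c / d ^ Suc m"
      using d_ge_3 by (simp add: divide_right_mono)
    moreover have "c / d ^ Suc m \<le> c / d ^ m - c / d ^ Suc m"
      using d_ge_3 c_nonneg mult_left_mono[of 2 d c] by (simp add: field_simps)
    ultimately show ?case using step.IH by linarith
  qed simp
  moreover have "0 \<le> c / d ^ m" using c_nonneg d_ge_3 by simp
  ultimately show ?thesis by linarith
qed

lemma L_outside: "\<not> V n \<Longrightarrow> L n + c \<le> (d - 1) ^ n * (L 0 + c)"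
proof (induction n)
  case (Suc n)
  have "2 * c \<le> (d - 1) * c" using d_ge_3 c_nonneg by (intro mult_right_mono) auto
  then have "L (Suc n) + c \<le> (d - 1) * (L n + c)"
    unfolding distrib_left using L_Suc_le_outside[OF Suc.prems] by linarith
  also have "\<dots> \<le> (d - 1) * ((d - 1) ^ n * (L 0 + c))"
    using Suc d_ge_3 V_Suc by (intro mult_left_mono) auto
  finally show ?case by simp
qed simp

lemma normalized_outside: "\<not> V n \<Longrightarrow> L n / d ^ n \<le> ((d - 1) / d) ^ n * (L 0 + c)"
proof -
  assume "\<not> V n"
  then have "L n \<le> (d - 1) ^ n * (L 0 + c)" using L_outside c_nonneg by fastforce
  then have "L n / d ^ n \<le> (d - 1) ^ n * (L 0 + c) / d ^ n"
    using d_ge_3 by (intro divide_right_mono) auto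
  then show ?thesis by (simp add: power_divide)
qed

lemma normalized_cauchy:
  assumes "n \<le> m"
  shows "\<bar>L m / d ^ m - L n / d ^ n\<bar> \<le> ((d - 1) / d) ^ n * (L 0 + c) + 2 * c / d ^ n"
proof -
  define A where "A = L 0 + c"
  have A: "0 \<le> A" using L_nonneg c_nonneg unfolding A_def by simp
  have nonneg: "0 \<le> L j / d ^ j" for j using L_nonneg d_ge_3 by simp
  have twice: "2 * c / x = c / x + c / x" for x by (metis add_divide_distrib mult_2)
  have decay: "((d - 1) / d) ^ j * A \<le> ((d - 1) / d) ^ n * A"
    and small: "c / d ^ j \<le> c / d ^ n" if "n \<le> j" for j
    using that A c_nonneg d_ge_3
    by (intro mult_right_mono power_decreasing divide_left_mono power_increasing; simp)+
  show ?thesis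
  proof (cases "V n")
    case True
    have "0 \<le> ((d - 1) / d) ^ n * A" "c / d ^ n \<le> 2 * c / d ^ n"
      using A d_ge_3 c_nonneg by (simp_all add: divide_right_mono)
    then show ?thesis using normalized_diff_inside[OF True assms] unfolding A_def by linarith
  next
    case outside: False
    have "L m / d ^ m \<le> ((d - 1) / d) ^ n * A + 2 * c / d ^ n"
    proof (cases "V m")
      case False
      then show ?thesis
        using normalized_outside[of m] decay[OF assms] c_nonneg d_ge_3 unfolding A_def
        by (simp add: add_increasing2)
    next
      case True
      obtain i where i: "i < m - n" "\<not> V (n + i)" "V (n + Suc i)"
        using ex_least_nat_less[of "\<lambda>i. V (n + i)" "m - n"] True outside assms by auto
      have "V (Suc (n + i))" "Suc (n + i) \<le> m" using i by simp_all
      then have "L m / d ^ m \<le> L (Suc (n + i)) / d ^ Suc (n + i) + c / d ^ Suc (n + i)"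
        using normalized_diff_inside[unfolded abs_le_iff] by fastforce
      also have "\<dots> \<le> L (n + i) / d ^ (n + i) + 2 * c / d ^ Suc (n + i)"
        using normalized_Suc_le[of "n + i"] twice[of "d ^ Suc (n + i)"] by linarith
      also have "\<dots> \<le> ((d - 1) / d) ^ n * A + 2 * c / d ^ n"
        using normalized_outside[OF i(2)] decay[of "n + i"] small[of "Suc (n + i)"]
          twice[of "d ^ n"] twice[of "d ^ Suc (n + i)"]
        unfolding A_def by simp
      finally show ?thesis .
    qed
    moreover have "L n / d ^ n \<le> ((d - 1) / d) ^ n * A"
      using normalized_outside[OF outside] unfolding A_def .
    moreover have "0 \<le> 2 * c / d ^ n" using c_nonneg d_ge_3 by simp
    ultimately show ?thesis using nonneg[of m] nonneg[of n] unfolding A_def abs_le_iff by linarith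
  qed
qed

lemma normalized_tendsto_zero_outside:
  assumes "\<And>n. \<not> V n"
  shows "(\<lambda>n. L n / d ^ n) \<longlonglongrightarrow> 0"
proof (rule Lim_null_comparison)
  show "\<forall>\<^sub>F n in sequentially. norm (L n / d ^ n) \<le> ((d - 1) / d) ^ n * (L 0 + c)"
    using normalized_outside[OF assms] L_nonneg d_ge_3 by simp
  have "(\<lambda>n. ((d - 1) / d) ^ n * (L 0 + c)) \<longlonglongrightarrow> 0 * (L 0 + c)"
    using d_ge_3 by (intro tendsto_mult tendsto_const LIMSEQ_power_zero) auto
  then show "(\<lambda>n. ((d - 1) / d) ^ n * (L 0 + c)) \<longlonglongrightarrow> 0" by simp
qed

end

lemma ln_le_of_le_mult_power:
  fixes C r s :: real
  assumes "0 < C" "0 < r" "0 < s" "s \<le> C * r ^ m"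
  shows "ln s \<le> real m * ln r + ln C"
proof -
  have "ln s \<le> ln (C * r ^ m)" using assms by simp
  also have "\<dots> = real m * ln r + ln C" using assms(1,2) by (simp add: ln_mult ln_realpow)
  finally show ?thesis .
qed

locale perturbed_weak_shifts =
  fixes k d :: nat and a :: "nat \<Rightarrow> complex" and \<alpha> :: "nat \<Rightarrow> (nat \<Rightarrow> nat) \<Rightarrow> complex"
    and M :: real
  assumes k_ge_3: "3 \<le> k" and d_ge_3: "3 \<le> d"
    and a_le: "cmod (a n) \<le> M"
    and \<alpha>_le: "cmod (\<alpha> n i) \<le> M"
    and \<alpha>_support: "{i. \<alpha> n i \<noteq> 0} \<subseteq> exponents k (d - 2)"
begin

abbreviation S :: "nat \<Rightarrow> (nat \<Rightarrow> complex) \<Rightarrow> nat \<Rightarrow> complex" where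
  "S n \<equiv> weak_shift k d (a n) (\<alpha> n)"

abbreviation orbit :: "nat \<Rightarrow> (nat \<Rightarrow> complex) \<Rightarrow> nat \<Rightarrow> complex" where
  "orbit n z \<equiv> Scomp k d a \<alpha> n z"

text \<open>R makes w_k^d dominate the rest of the last coordinate of S_n w on Vplus; C is large
enough to serve in all three one-step estimates for max(1, |w|).\<close>

definition P :: real where "P = M * card (exponents k (d - 2))"
definition R :: real where "R = 8 * real k + 4 * M + 4 * P"
definition C :: real where "C = 2 * real k * R"

definition Vplus :: "(nat \<Rightarrow> complex) set" where
  "Vplus = {w. R \<le> cmod (w (k - 1)) \<and> (\<forall>j<k - 1. real k * cmod (w j) \<le> cmod (w (k - 1)))}"

lemma M_nonneg: "0 \<le> M"
  using order_trans[OF norm_ge_zero a_le] .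

lemma P_nonneg: "0 \<le> P"
  unfolding P_def using M_nonneg by simp

lemma R_ge: "8 * real k \<le> R" "4 * M + 4 * P \<le> R"
  unfolding R_def using M_nonneg P_nonneg by auto

lemma C_ge: "R \<le> C" "2 * real k \<le> C"
proof -
  have "1 \<le> R" "1 \<le> real k" using R_ge(1) k_ge_3 by linarith+
  then show "R \<le> C" "2 * real k \<le> C"
    unfolding C_def using mult_left_mono[of 1 R "2 * real k"] mult_right_mono[of 1 R "2 * real k"]
    by simp_all
qed

lemma C_ge_1: "1 \<le> C"
  using C_ge R_ge k_ge_3 by linarith

lemma weak_shift_shift: "j < k - 2 \<Longrightarrow> S n w j = w (j + 1)"
  unfolding weak_shift_def by simp

lemma weak_shift_penultimate: "S n w (k - 2) = w (k - 1) + w 1 ^ (d - 1)"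
  unfolding weak_shift_def by simp

lemma weak_shift_last: "S n w (k - 1) = a n * w 0 + poly_p k (\<alpha> n) w + (\<Sum>l\<in>{1..<k}. w l ^ d)"
proof -
  have "k - 1 \<noteq> k - 2" "\<not> k - 1 < k - 2" using k_ge_3 by auto
  then show ?thesis unfolding weak_shift_def by simp
qed

lemma norm_poly_le: "cmod (poly_p k (\<alpha> n) w) \<le> P * supnorm1 k w ^ (d - 2)"
  unfolding P_def
  by (rule norm_poly_p_le) (use \<alpha>_support in \<open>auto intro: supnorm1_ge_1 norm_le_supnorm1 \<alpha>_le\<close>)

lemma supnorm1_power_mono: "i \<le> j \<Longrightarrow> supnorm1 k w ^ i \<le> supnorm1 k w ^ j"
  by (rule power_increasing[OF _ supnorm1_ge_1])

lemma norm_weak_shift_le: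
  assumes "j < k - 1"
  shows "cmod (S n w j) \<le> 2 * supnorm1 k w ^ (d - 1)"
proof -
  let ?r = "supnorm1 k w"
  have r: "?r \<le> ?r ^ (d - 1)" using supnorm1_power_mono[of 1 "d - 1"] d_ge_3 by simp
  show ?thesis
  proof (cases "j < k - 2")
    case True
    then have "cmod (S n w j) = cmod (w (j + 1))" by (simp add: weak_shift_shift)
    also have "\<dots> \<le> ?r" using True by (intro norm_le_supnorm1) simp
    finally show ?thesis using r supnorm1_ge_1[of k w] by linarith
  next
    case False
    then have "j = k - 2" using assms by simp
    then have "cmod (S n w j) \<le> cmod (w (k - 1)) + cmod (w 1) ^ (d - 1)"
      by (metis weak_shift_penultimate norm_power norm_triangle_ineq)
    also have "\<dots> \<le> ?r + ?r ^ (d - 1)"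
      using k_ge_3 by (intro add_mono power_mono norm_le_supnorm1) auto
    finally show ?thesis using r by simp
  qed
qed

lemma norm_weak_shift_last_le: "cmod (S n w (k - 1)) \<le> (M + P + real k) * supnorm1 k w ^ d"
proof -
  let ?r = "supnorm1 k w"
  have "cmod (a n * w 0) \<le> M * ?r"
    unfolding norm_mult using k_ge_3 M_nonneg by (intro mult_mono a_le norm_le_supnorm1) auto
  also have "\<dots> \<le> M * ?r ^ d"
    using supnorm1_power_mono[of 1 d] d_ge_3 M_nonneg by (simp add: mult_left_mono)
  finally have lin: "cmod (a n * w 0) \<le> M * ?r ^ d" .
  have poly: "cmod (poly_p k (\<alpha> n) w) \<le> P * ?r ^ d"
    using norm_poly_le[of n w] supnorm1_power_mono[of "d - 2" d w] P_nonneg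
    by (meson diff_le_self mult_left_mono order_trans)
  have "cmod (\<Sum>l\<in>{1..<k}. w l ^ d) \<le> (\<Sum>l\<in>{1..<k}. cmod (w l) ^ d)"
    unfolding norm_power[symmetric] by (rule norm_sum)
  also have "\<dots> \<le> (\<Sum>l\<in>{1..<k}. ?r ^ d)"
    by (intro sum_mono power_mono norm_le_supnorm1) auto
  also have "\<dots> = real (k - 1) * ?r ^ d" by simp
  also have "\<dots> \<le> real k * ?r ^ d" using supnorm1_ge_1[of k w] by (intro mult_right_mono) auto
  finally have top: "cmod (\<Sum>l\<in>{1..<k}. w l ^ d) \<le> real k * ?r ^ d" .
  have "cmod (S n w (k - 1))
        \<le> cmod (a n * w 0) + cmod (poly_p k (\<alpha> n) w) + cmod (\<Sum>l\<in>{1..<k}. w l ^ d)"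
    unfolding weak_shift_last by (meson add_mono norm_triangle_ineq order_trans order_refl)
  also have "\<dots> \<le> (M + P + real k) * ?r ^ d"
    using lin poly top by (simp add: distrib_right)
  finally show ?thesis .
qed

lemma supnorm1_weak_shift_le: "supnorm1 k (S n w) \<le> C * supnorm1 k w ^ d"
proof (rule supnorm1_le)
  let ?r = "supnorm1 k w"
  have r: "1 \<le> ?r ^ d" using supnorm1_ge_1 by simp
  have C: "M + P + real k \<le> C" "2 \<le> C" using C_ge R_ge k_ge_3 M_nonneg P_nonneg by linarith+
  then show "1 \<le> C * ?r ^ d" using r by (metis mult_mono one_le_numeral order_trans mult_1 zero_le_one)
  fix j assume "j < k"
  show "cmod (S n w j) \<le> C * ?r ^ d"
  proof (cases "j < k - 1")
    case True
    have "2 * ?r ^ (d - 1) \<le> C * ?r ^ d"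
      using supnorm1_power_mono[of "d - 1" d w] C(2) r by (intro mult_mono) auto
    then show ?thesis using norm_weak_shift_le[OF True, of n w] by linarith
  next
    case False
    have "(M + P + real k) * ?r ^ d \<le> C * ?r ^ d" using C(1) by (intro mult_right_mono) auto
    moreover have "j = k - 1" using False \<open>j < k\<close> by simp
    ultimately show ?thesis using norm_weak_shift_last_le[of n w] by simp
  qed
qed (use k_ge_3 in simp)

lemma supnorm1_Vplus:
  assumes "w \<in> Vplus"
  shows "supnorm1 k w = cmod (w (k - 1))"
proof -
  have small: "real k * cmod (w j) \<le> cmod (w (k - 1))" if "j < k - 1" for j
    using assms that unfolding Vplus_def by blast
  have "supnorm k w \<le> cmod (w (k - 1))"
  proof (rule supnorm_le)
    fix j assume "j < k"
    then consider "j < k - 1" | "j = k - 1" by linarith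
    then show "cmod (w j) \<le> cmod (w (k - 1))"
    proof cases
      case 1
      then show ?thesis using small[OF 1] k_ge_3 mult_right_mono[of 1 "real k" "cmod (w j)"] by simp
    qed simp
  qed (use k_ge_3 in simp)
  moreover have "cmod (w (k - 1)) \<le> supnorm k w" using k_ge_3 by (intro norm_le_supnorm) simp
  moreover have "1 \<le> cmod (w (k - 1))" using assms R_ge k_ge_3 unfolding Vplus_def by simp
  ultimately show ?thesis unfolding supnorm1_def by simp
qed

lemma norm_weak_shift_last_ge:
  assumes w: "w \<in> Vplus"
  shows "cmod (w (k - 1)) ^ d / 4 \<le> cmod (S n w (k - 1))"
proof -
  define x where "x = cmod (w (k - 1))"
  have x: "R \<le> x" and small: "\<And>j. j < k - 1 \<Longrightarrow> real k * cmod (w j) \<le> x"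
    using w unfolding Vplus_def x_def by auto
  have x1: "1 \<le> x" using x R_ge k_ge_3 by simp
  define tail where "tail = (\<Sum>l\<in>{1..<k - 1}. w l ^ d)"
  define rest where "rest = a n * w 0 + poly_p k (\<alpha> n) w"
  have "{1..<k} = insert (k - 1) {1..<k - 1}" using k_ge_3 by auto
  then have split: "S n w (k - 1) = w (k - 1) ^ d + tail + rest"
    unfolding weak_shift_last tail_def rest_def by simp
  have "cmod tail \<le> (\<Sum>l\<in>{1..<k - 1}. cmod (w l) ^ d)"
    unfolding tail_def norm_power[symmetric] by (rule norm_sum)
  also have "\<dots> \<le> (\<Sum>l\<in>{1..<k - 1}. (x / real k) ^ d)"
    using small k_ge_3 by (intro sum_mono power_mono) (auto simp: field_simps)
  also have "\<dots> = real (k - 2) / real k ^ d * x ^ d"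
    by (simp add: power_divide numeral_2_eq_2)
  also have "\<dots> \<le> 1 / 2 * x ^ d"
  proof (intro mult_right_mono)
    have "real k ^ 2 \<le> real k ^ d" using k_ge_3 d_ge_3 by (intro power_increasing) auto
    moreover have "2 * (k - 2) \<le> k ^ 2"
      using mult_le_mono1[OF k_ge_3, of k] unfolding power2_eq_square by linarith
    then have "2 * real (k - 2) \<le> real k ^ 2" by (metis of_nat_le_iff of_nat_mult of_nat_numeral of_nat_power)
    ultimately have "2 * real (k - 2) \<le> real k ^ d" by linarith
    then show "real (k - 2) / real k ^ d \<le> 1 / 2" using k_ge_3 by (simp add: field_simps)
  qed (use x1 in simp)
  finally have tail_le: "cmod tail \<le> x ^ d / 2" by simp
  have w0: "cmod (w 0) \<le> x"
    using norm_le_supnorm1[of 0 k w] supnorm1_Vplus[OF w] k_ge_3 unfolding x_def by simp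
  have "cmod rest \<le> cmod (a n * w 0) + cmod (poly_p k (\<alpha> n) w)"
    unfolding rest_def by (rule norm_triangle_ineq)
  also have "\<dots> \<le> M * x + P * x ^ (d - 2)"
    using mult_mono[OF a_le[of n] w0] M_nonneg norm_poly_le[of n w] supnorm1_Vplus[OF w]
    unfolding norm_mult x_def by (intro add_mono) auto
  also have "\<dots> \<le> M * x ^ (d - 1) + P * x ^ (d - 1)"
    using x1 d_ge_3 M_nonneg P_nonneg power_increasing[of 1 "d - 1" x]
    by (intro add_mono mult_left_mono power_increasing) auto
  also have "\<dots> = (M + P) * x ^ (d - 1)" by (simp add: distrib_right)
  also have "\<dots> \<le> x / 4 * x ^ (d - 1)"
    using x R_ge x1 by (intro mult_right_mono) auto
  also have "\<dots> = x ^ d / 4"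
    using d_ge_3 by (cases d) simp_all
  finally have rest_le: "cmod rest \<le> x ^ d / 4" .
  have "cmod (w (k - 1) ^ d) - cmod (tail + rest) \<le> cmod (S n w (k - 1))"
    unfolding split add.assoc by (rule norm_diff_ineq)
  moreover have "cmod (tail + rest) \<le> cmod tail + cmod rest" by (rule norm_triangle_ineq)
  ultimately show ?thesis using tail_le rest_le unfolding x_def norm_power by linarith
qed

lemma Vplus_growth:
  assumes w: "w \<in> Vplus"
  shows "2 * cmod (w (k - 1)) \<le> cmod (S n w (k - 1))"
    and "j < k - 1 \<Longrightarrow> cmod (S n w j) \<le> 8 / cmod (w (k - 1)) * cmod (S n w (k - 1))"
proof -
  define x where "x = cmod (w (k - 1))"
  have x: "8 * real k \<le> x" using w R_ge unfolding Vplus_def x_def by auto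
  then have x8: "8 \<le> x" using k_ge_3 by linarith
  have xd: "x ^ d = x * x ^ (d - 1)" using d_ge_3 by (cases d) simp_all
  have "x \<le> x ^ (d - 1)" using power_increasing[of 1 "d - 1" x] x8 d_ge_3 by simp
  then have "8 * x \<le> x * x ^ (d - 1)" using x8 by (intro mult_mono) auto
  then show "2 * cmod (w (k - 1)) \<le> cmod (S n w (k - 1))"
    using norm_weak_shift_last_ge[OF w, of n] xd unfolding x_def by simp
  assume "j < k - 1"
  then have "cmod (S n w j) \<le> 2 * x ^ (d - 1)"
    using norm_weak_shift_le[of j n w] supnorm1_Vplus[OF w] unfolding x_def by simp
  also have "\<dots> = 8 / x * (x ^ d / 4)" using xd x8 by simp
  also have "\<dots> \<le> 8 / x * cmod (S n w (k - 1))"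
    using norm_weak_shift_last_ge[OF w, of n] x8 unfolding x_def by (intro mult_left_mono) auto
  finally show "cmod (S n w j) \<le> 8 / cmod (w (k - 1)) * cmod (S n w (k - 1))"
    unfolding x_def .
qed

lemma weak_shift_Vplus:
  assumes w: "w \<in> Vplus"
  shows "S n w \<in> Vplus"
proof -
  define x where "x = cmod (w (k - 1))"
  have x: "R \<le> x" "8 * real k \<le> x" using w R_ge unfolding Vplus_def x_def by auto
  have "R \<le> cmod (S n w (k - 1))"
    using Vplus_growth(1)[OF w, of n] x R_ge k_ge_3 unfolding x_def by linarith
  moreover have "real k * cmod (S n w j) \<le> cmod (S n w (k - 1))" if "j < k - 1" for j
  proof -
    have "real k * cmod (S n w j) \<le> real k * (8 / x * cmod (S n w (k - 1)))"
      using Vplus_growth(2)[OF w that, of n] unfolding x_def by (intro mult_left_mono) auto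
    also have "\<dots> = (8 * real k / x) * cmod (S n w (k - 1))" by simp
    also have "\<dots> \<le> 1 * cmod (S n w (k - 1))"
      using x k_ge_3 by (intro mult_right_mono) simp_all
    finally show ?thesis by simp
  qed
  ultimately show ?thesis unfolding Vplus_def by blast
qed

lemma supnorm1_weak_shift_ge:
  assumes "w \<in> Vplus"
  shows "supnorm1 k w ^ d \<le> C * supnorm1 k (S n w)"
proof -
  have "supnorm1 k w ^ d \<le> 4 * cmod (S n w (k - 1))"
    using norm_weak_shift_last_ge[OF assms, of n] supnorm1_Vplus[OF assms] by simp
  also have "\<dots> \<le> C * supnorm1 k (S n w)"
    using C_ge R_ge k_ge_3 norm_le_supnorm1[of "k - 1" k "S n w"]
    by (intro mult_mono) auto
  finally show ?thesis .
qed

lemma supnorm1_weak_shift_le_outside: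
  assumes "S n w \<notin> Vplus"
  shows "supnorm1 k (S n w) \<le> C * supnorm1 k w ^ (d - 1)"
proof -
  define E where "E = supnorm1 k w ^ (d - 1)"
  have E: "1 \<le> E" unfolding E_def using supnorm1_ge_1 by simp
  have "1 \<le> R" using R_ge k_ge_3 by linarith
  then have "C * 1 \<le> C * E" using C_ge E by (intro mult_left_mono) auto
  then have CE: "R \<le> C * E" "2 * real k * E \<le> C * E"
    using C_ge E by (auto intro: mult_right_mono)
  have "2 * E \<le> 2 * real k * E" using E k_ge_3 by (intro mult_right_mono) auto
  then have lower: "cmod (S n w j) \<le> 2 * real k * E" if "j < k - 1" for j
    using norm_weak_shift_le[OF that, of n w] unfolding E_def by linarith
  have last: "cmod (S n w (k - 1)) \<le> C * E"
  proof (cases "R \<le> cmod (S n w (k - 1))")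
    case True
    then obtain j where j: "j < k - 1" "cmod (S n w (k - 1)) < real k * cmod (S n w j)"
      using assms unfolding Vplus_def by (auto simp: not_le)
    have "real k * cmod (S n w j) \<le> real k * (2 * real k * E)"
      using lower[OF j(1)] by (intro mult_left_mono) auto
    also have "\<dots> = 2 * real k * (real k * E)" by simp
    also have "\<dots> \<le> 2 * real k * (R * E)"
      using R_ge E by (intro mult_left_mono mult_right_mono) auto
    also have "\<dots> = C * E" unfolding C_def by simp
    finally show ?thesis using j(2) by linarith
  qed (use CE in linarith)
  show ?thesis unfolding E_def[symmetric]
  proof (rule supnorm1_le)
    fix j assume "j < k"
    then consider "j < k - 1" | "j = k - 1" by linarith
    then show "cmod (S n w j) \<le> C * E"
      by cases (use lower CE last in \<open>auto intro: order_trans\<close>)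
  qed (use k_ge_3 CE \<open>1 \<le> R\<close> in linarith)+
qed

lemma escape_rate_orbit:
  "escape_rate (real d) (ln C) (\<lambda>n. ln (supnorm1 k (orbit n z))) (\<lambda>n. orbit n z \<in> Vplus)"
proof
  have C: "0 < C" using C_ge_1 by linarith
  show "3 \<le> real d" using d_ge_3 by simp
  show "0 \<le> ln C" using C_ge_1 by simp
  fix n
  show "0 \<le> ln (supnorm1 k (orbit n z))" using supnorm1_ge_1 by simp
  let ?w = "orbit n z"
  show "ln (supnorm1 k (orbit (Suc n) z)) \<le> real d * ln (supnorm1 k ?w) + ln C"
    using ln_le_of_le_mult_power[OF C supnorm1_pos supnorm1_pos supnorm1_weak_shift_le] by simp
  show "real d * ln (supnorm1 k ?w) - ln C \<le> ln (supnorm1 k (orbit (Suc n) z))"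
    if "?w \<in> Vplus"
    using ln_le_of_le_mult_power[of C "supnorm1 k (S n ?w)" "supnorm1 k ?w ^ d" 1]
      supnorm1_weak_shift_ge[OF that, of n] C supnorm1_pos[of k ?w] supnorm1_pos[of k "S n ?w"]
    by (simp add: ln_realpow)
  show "orbit (Suc n) z \<in> Vplus" if "?w \<in> Vplus"
    using weak_shift_Vplus[OF that] by simp
  show "ln (supnorm1 k (orbit (Suc n) z)) \<le> (real d - 1) * ln (supnorm1 k ?w) + ln C"
    if "orbit (Suc n) z \<notin> Vplus"
    using ln_le_of_le_mult_power[OF C supnorm1_pos supnorm1_pos supnorm1_weak_shift_le_outside]
      that d_ge_3 by (simp add: of_nat_diff)
qed

lemma orbit_Vplus_proj_tendsto:
  assumes t: "orbit t z \<in> Vplus"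
  shows "proj_tendsto_ek k (\<lambda>n. orbit n z)"
proof (rule proj_tendsto_ekI)
  define x where "x n = cmod (orbit n z (k - 1))" for n
  have V: "orbit m z \<in> Vplus" if "t \<le> m" for m
    using escape_rate.V_mono[OF escape_rate_orbit t that] .
  have x1: "1 \<le> x m" if "t \<le> m" for m
    using V[OF that] R_ge k_ge_3 unfolding Vplus_def x_def by auto
  have lin: "- real t + real m \<le> x m" if "t \<le> m" for m
    using that
  proof (induction m rule: dec_induct)
    case base
    then show ?case using x1[of t] by simp
  next
    case (step m)
    have "2 * x m \<le> x (Suc m)"
      using Vplus_growth(1)[OF V[OF step(1)], of m] unfolding x_def by simp
    then show ?case using step x1[OF step(1)] by simp
  qed
  have "filterlim x at_top sequentially"
    by (rule filterlim_at_top_mono[OF filterlim_tendsto_add_at_top[OF tendsto_const[of "- real t"]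
          filterlim_real_sequentially]])
      (use lin in \<open>auto simp: eventually_at_top_linorder\<close>)
  then show "filterlim (\<lambda>n. cmod (orbit n z (k - 1))) at_top sequentially"
    unfolding x_def[abs_def] .
  show "\<forall>\<^sub>F n in sequentially. \<forall>j<k - 1.
          cmod (orbit (Suc n) z j) \<le> 8 / cmod (orbit n z (k - 1)) * cmod (orbit (Suc n) z (k - 1))"
    unfolding eventually_at_top_linorder using Vplus_growth(2)[OF V] by auto
qed

lemma Gn_eq: "Gn k d a \<alpha> n z = ln (supnorm1 k (orbit n z)) / real d ^ n"
  unfolding Gn_def logplus_supnorm ..

definition cauchy_rate :: "real \<Rightarrow> nat \<Rightarrow> real" where
  "cauchy_rate B n = ((real d - 1) / real d) ^ n * (ln B + ln C) + 2 * ln C / real d ^ n"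

lemma cauchy_rate_tendsto_0: "cauchy_rate B \<longlonglongrightarrow> 0"
  unfolding cauchy_rate_def[abs_def] using d_ge_3
  by (intro tendsto_add_zero tendsto_mult_left_zero LIMSEQ_power_zero LIMSEQ_divide_realpow_zero)
    auto

lemma uniformly_Cauchy_on_Gn:
  assumes B: "\<And>z. z \<in> K \<Longrightarrow> supnorm1 k z \<le> B"
  shows "uniformly_Cauchy_on K (Gn k d a \<alpha>)"
proof (rule uniformly_Cauchy_onI_bound[OF _ cauchy_rate_tendsto_0])
  fix z and n m :: nat
  assume z: "z \<in> K" and "n \<le> m"
  have "ln (supnorm1 k z) \<le> ln B" using B[OF z] supnorm1_pos[of k z] by simp
  then have "((real d - 1) / real d) ^ n * (ln (supnorm1 k z) + ln C)
      \<le> ((real d - 1) / real d) ^ n * (ln B + ln C)"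
    using d_ge_3 by (intro mult_left_mono) auto
  then show "dist (Gn k d a \<alpha> m z) (Gn k d a \<alpha> n z) \<le> cauchy_rate B n"
    using escape_rate.normalized_cauchy[OF escape_rate_orbit \<open>n \<le> m\<close>, of z]
    unfolding cauchy_rate_def dist_real_def Gn_eq by simp
qed

lemma Gn_tendsto_Gfun:
  assumes "z \<in> Ck k"
  shows "(\<lambda>n. Gn k d a \<alpha> n z) \<longlonglongrightarrow> Gfun k d a \<alpha> z"
proof (cases "z \<in> Uplus k d a \<alpha>")
  case True
  have "uniformly_Cauchy_on {z} (Gn k d a \<alpha>)"
    by (rule uniformly_Cauchy_on_Gn[of _ "supnorm1 k z"]) simp
  then have "convergent (\<lambda>n. Gn k d a \<alpha> n z)"
    unfolding Cauchy_convergent_iff[symmetric] by (rule uniformly_Cauchy_imp_Cauchy) simp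
  then show ?thesis using True unfolding Gfun_def by (simp add: convergent_LIMSEQ_iff)
next
  case False
  then have "orbit n z \<notin> Vplus" for n
    using orbit_Vplus_proj_tendsto assms unfolding Uplus_def by blast
  then show ?thesis
    using escape_rate.normalized_tendsto_zero_outside[OF escape_rate_orbit] False
    unfolding Gfun_def Gn_eq by simp
qed

theorem uniform_limit_Gn:
  assumes "compact K" "K \<subseteq> Ck k"
  shows "uniform_limit K (Gn k d a \<alpha>) (Gfun k d a \<alpha>) sequentially"
proof -
  have "0 < k" using k_ge_3 by simp
  then obtain B where "\<And>z. z \<in> K \<Longrightarrow> supnorm1 k z \<le> B"
    using compact_supnorm1_bounded[OF assms(1)] by blast
  then have "uniformly_Cauchy_on K (Gn k d a \<alpha>)" by (rule uniformly_Cauchy_on_Gn)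
  then show ?thesis
    using Gn_tendsto_Gfun assms(2) by (blast intro: uniformly_Cauchy_on_uniform_limit)
qed

end

theorem lemma3p9:
  fixes k d dt :: nat
    and a :: "nat \<Rightarrow> complex"
    and \<alpha> :: "nat \<Rightarrow> (nat \<Rightarrow> nat) \<Rightarrow> complex"
    and mt Mt :: real
  assumes k3: "k \<ge> 3"
    and dt1: "dt \<ge> 1"
    and ddt: "dt + 2 \<le> d"
    and mt_pos: "mt > 0" and Mt_pos: "Mt > 0"
    and a_bd: "\<And>n. mt < cmod (a n) \<and> cmod (a n) < Mt"
    and alpha_bd: "\<And>n i. cmod (\<alpha> n i) < Mt"
    and alpha_vars: "\<And>n i. \<alpha> n i \<noteq> 0 \<Longrightarrow> (\<forall>j. j \<notin> {1..<k} \<longrightarrow> i j = 0)"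
    and alpha_deg: "\<And>n i. \<alpha> n i \<noteq> 0 \<Longrightarrow> multi_deg i k \<le> dt"
    and deg_exact: "\<And>n. dt = 1 \<or> (\<exists>i. \<alpha> n i \<noteq> 0 \<and> multi_deg i k = dt)"
  shows "\<forall>K. compact K \<and> K \<subseteq> Ck k \<longrightarrow>
           uniform_limit K (\<lambda>n z. Gn k d a \<alpha> n z) (Gfun k d a \<alpha>) sequentially"
proof -
  interpret perturbed_weak_shifts k d a \<alpha> Mt
  proof
    show "3 \<le> k" by (rule k3)
    show "3 \<le> d" using dt1 ddt by simp
    show "cmod (a n) \<le> Mt" for n using a_bd[of n] by simp
    show "cmod (\<alpha> n i) \<le> Mt" for n i using alpha_bd[of n i] by simp
    show "{i. \<alpha> n i \<noteq> 0} \<subseteq> exponents k (d - 2)" for n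
      using alpha_vars alpha_deg ddt unfolding exponents_def by fastforce
  qed
  show ?thesis using uniform_limit_Gn by blast
qed

end
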